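(* Let $\Omega \subseteq \mathbb{R}^n$ be open, let $F \in C^1(\Omega,\mathbb{R}^n)$, and fix a vector norm $\|\cdot\|$ on $\mathbb{R}^n$ together with its induced matrix norm. Assume there are nonnegative numbers $K, L, M$ such that for all $x, y \in \Omega$, $F'(x)$ is nonsingular and \[ \|F'(x)^{-1}\| \le K, \qquad \|F'(x)-F'(y)\| \le L\|x-y\|, \qquad \|F'(x)\| \le M. \] Let $z \in \Omega$ satisfy $F(z)=0$. Define $g(x) = x - F'(x)^{-1}F(x)$ for $x \in \Omega$. Let $x_k \in \Omega$ be such that the line segment $\{t x_k + (1-t) z : t\in[0,1]\}$ is contained in $\Omega$, let $D_k \in \mathbb{R}^{n\times n}$ be a diagonal matrix and $E_k \in \mathbb{R}^{n\times n}$ any matrix, and define \[ x_{k+1} = (I + D_k)\Big( g(x_k) - E_k F'(x_k)^{-1}F(x_k) \Big). \] Then \[ x_{k+1} - z = g(x_k) - z - E_kF'(x_k)^{-1}F(x_k) + D_k\big[ g(x_k) - E_kF'(x_k)^{-1}F(x_k)\big] \] and \[ \|x_{k+1}-z\| \le \tfrac12 LK\|x_k-z\|^2 + \|E_k\|KM\|x_k-z\| + \|D_k\|\Big( \|z\| + \tfrac12 LK\|x_k-z\|^2 + \|E_k\|KM\|x_k-z\| \Big). \]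
   Context: $F'$ denotes the Jacobian of $F$ and $I$ the $n\times n$ identity matrix. The iteration models a quasi-Newton method in finite precision: $D_k$ represents rounding error in the subtraction and $E_k$ represents the relative discrepancy between the computed correction and the exact Newton correction $F'(x_k)^{-1}F(x_k)$. *)

theory Defs
  imports "HOL-Analysis.Analysis"
begin

definition is_vec_norm :: "(real^'n \<Rightarrow> real) \<Rightarrow> bool" where
  "is_vec_norm N \<longleftrightarrow>
     (\<forall>x. 0 \<le> N x) \<and> (\<forall>x. N x = 0 \<longleftrightarrow> x = 0) \<and>
     (\<forall>c x. N (c *s x) = \<bar>c\<bar> * N x) \<and> (\<forall>x y. N (x + y) \<le> N x + N y)"

definition induced_norm :: "(real^'n \<Rightarrow> real) \<Rightarrow> real^'n^'n \<Rightarrow> real" where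
  "induced_norm N A = (SUP x\<in>{x. x \<noteq> 0}. N (A *v x) / N x)"

definition is_diagonal :: "real^'n^'n \<Rightarrow> bool" where
  "is_diagonal A \<longleftrightarrow> (\<forall>i j. i \<noteq> j \<longrightarrow> A $ i $ j = 0)"

end

theory Submission
  imports Defs
begin

(* Subtracting z, the new error splits into the Newton error
   g(x_k) - z = F'(x_k)^-1 (F'(x_k) (x_k - z) - F(x_k)), the correction E_k F'(x_k)^-1 F(x_k),
   and the rounding term D_k w with N w <= N z + N (w - z).  Since F z = 0, the first two are
   controlled by mean value inequalities along the segment from z to x_k:
   N (F x_k) <= M N (x_k - z) and N (F x_k - F'(x_k) (x_k - z)) <= L/2 N (x_k - z)^2.
   For the arbitrary norm N the mean value inequality is obtained by testing against a
   supporting functional of its unit ball (finite-dimensional Hahn-Banach), and the induced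
   matrix norm is finite because N, being convex and hence continuous, is equivalent to the
   Euclidean norm. *)

lemma matrix_inv_mult_left: "invertible A \<Longrightarrow> matrix_inv A ** A = mat 1"
  unfolding invertible_def matrix_inv_def by (rule someI2_ex) auto

lemma add_scaleR_diff_in_closed_segment:
  "0 \<le> t \<Longrightarrow> t \<le> 1 \<Longrightarrow> z + t *\<^sub>R (x - z) \<in> closed_segment z x"
  by (auto simp: in_segment algebra_simps intro!: exI[of _ t])

lemma has_vector_derivative_along_segment:
  fixes F :: "real^'n \<Rightarrow> real^'m" and J :: "real^'n \<Rightarrow> real^'n^'m"
  assumes "\<forall>y\<in>closed_segment z x. (F has_derivative (\<lambda>h. J y *v h)) (at y)"
    and "0 \<le> t" "t \<le> 1"
  shows "((\<lambda>t. F (z + t *\<^sub>R (x - z))) has_vector_derivative J (z + t *\<^sub>R (x - z)) *v (x - z)) (at t)"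
proof -
  have "(F has_derivative (\<lambda>h. J (z + t *\<^sub>R (x - z)) *v h)) (at (z + t *\<^sub>R (x - z)))"
    using assms add_scaleR_diff_in_closed_segment by blast
  moreover have "((\<lambda>t. z + t *\<^sub>R (x - z)) has_derivative (\<lambda>s. s *\<^sub>R (x - z))) (at t)"
    by (auto intro!: derivative_eq_intros)
  ultimately have "((\<lambda>t. F (z + t *\<^sub>R (x - z))) has_derivative
      (\<lambda>s. J (z + t *\<^sub>R (x - z)) *v (s *\<^sub>R (x - z)))) (at t)"
    by (metis has_derivative_compose)
  then show ?thesis
    by (simp add: has_vector_derivative_def matrix_vector_mult_scaleR)
qed

locale vec_norm =
  fixes N :: "real^'n \<Rightarrow> real"
  assumes is_vec_norm: "is_vec_norm N"
begin

lemma nonneg: "0 \<le> N x"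
  using is_vec_norm unfolding is_vec_norm_def by blast

lemma eq_0_iff: "N x = 0 \<longleftrightarrow> x = 0"
  using is_vec_norm unfolding is_vec_norm_def by blast

lemma zero [simp]: "N 0 = 0"
  by (simp add: eq_0_iff)

lemma pos: "x \<noteq> 0 \<Longrightarrow> 0 < N x"
  using nonneg eq_0_iff by (metis less_eq_real_def)

lemma scaleR: "N (c *\<^sub>R x) = \<bar>c\<bar> * N x"
  using is_vec_norm unfolding is_vec_norm_def scalar_mult_eq_scaleR by blast

lemma triangle: "N (x + y) \<le> N x + N y"
  using is_vec_norm unfolding is_vec_norm_def by blast

lemma minus: "N (- x) = N x"
  using scaleR[of "-1" x] by simp

lemma commute: "N (x - y) = N (y - x)"
  by (metis minus minus_diff_eq)

lemma convex_on_UNIV: "convex_on UNIV N"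
proof (rule convex_onI)
  fix x y :: "real^'n" and t :: real
  assume "0 < t" "t < 1"
  then show "N ((1 - t) *\<^sub>R x + t *\<^sub>R y) \<le> (1 - t) * N x + t * N y"
    using triangle[of "(1 - t) *\<^sub>R x" "t *\<^sub>R y"] by (simp add: scaleR)
qed simp

lemma continuous: "continuous_on UNIV N"
  by (rule convex_on_continuous[OF open_UNIV convex_on_UNIV])

lemma eq_norm_mult_sphere: "N x = norm x * N (x /\<^sub>R norm x)"
  by (cases "x = 0") (simp_all add: scaleR)

lemma equivalent_norm:
  obtains c C where "0 < c" "0 \<le> C" "\<And>x. c * norm x \<le> N x" "\<And>x. N x \<le> C * norm x"
proof -
  have sphere: "compact (sphere (0::real^'n) 1)" "sphere (0::real^'n) 1 \<noteq> {}"
    "continuous_on (sphere 0 1) N"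
    using continuous_on_subset[OF continuous] by auto
  obtain x0 where x0: "x0 \<in> sphere 0 1" "\<And>y. y \<in> sphere 0 1 \<Longrightarrow> N x0 \<le> N y"
    using continuous_attains_inf[OF sphere] by blast
  obtain x1 where x1: "\<And>y. y \<in> sphere 0 1 \<Longrightarrow> N y \<le> N x1"
    using continuous_attains_sup[OF sphere] by blast
  have "0 < N x0" "0 \<le> N x1"
    using x0(1) by (auto intro: pos nonneg)
  moreover have "N x0 * norm x \<le> N x" "N x \<le> N x1 * norm x" for x
  proof -
    have "x /\<^sub>R norm x \<in> sphere 0 1" if "x \<noteq> 0"
      using that by simp
    then show "N x0 * norm x \<le> N x" "N x \<le> N x1 * norm x"
      using x0(2) x1 eq_norm_mult_sphere[of x]
      by (cases "x = 0"; simp add: mult.commute mult_left_mono)+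
  qed
  ultimately show ?thesis
    using that by blast
qed

lemma bdd_above_induced_norm: "bdd_above ((\<lambda>x. N (A *v x) / N x) ` {x. x \<noteq> 0})"
proof -
  obtain c C where "0 < c" "0 \<le> C" and lower: "\<And>x. c * norm x \<le> N x"
    and upper: "\<And>x. N x \<le> C * norm x"
    using equivalent_norm by blast
  obtain B where B: "0 < B" "\<And>x. norm (A *v x) \<le> norm x * B"
    using bounded_linear.pos_bounded[OF matrix_vector_mul_bounded_linear[of A]] by blast
  have "N (A *v x) / N x \<le> C * B / c" if "x \<noteq> 0" for x
  proof -
    have "N (A *v x) \<le> C * (norm x * B)"
      using upper[of "A *v x"] mult_left_mono[OF B(2)[of x] \<open>0 \<le> C\<close>] by linarith
    also have "\<dots> \<le> C * B / c * N x"
      using mult_left_mono[OF lower[of x], of "C * B / c"] \<open>0 < c\<close> \<open>0 \<le> C\<close> B(1)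
      by (simp add: field_simps)
    finally show ?thesis
      using pos[OF that] by (simp add: divide_le_eq)
  qed
  then show ?thesis
    by (intro bdd_aboveI2) auto
qed

lemma induced_norm_nonneg: "0 \<le> induced_norm N A"
  unfolding induced_norm_def
  by (rule cSUP_upper2[OF bdd_above_induced_norm, of "axis undefined 1"])
    (simp_all add: axis_eq_0_iff nonneg)

lemma mult_le_induced_norm: "N (A *v x) \<le> induced_norm N A * N x"
proof (cases "x = 0")
  case False
  have "N (A *v x) / N x \<le> induced_norm N A"
    unfolding induced_norm_def by (rule cSUP_upper[OF _ bdd_above_induced_norm]) (simp add: False)
  then show ?thesis
    using pos[OF False] by (simp add: divide_le_eq)
qed simp

text \<open>Finite-dimensional Hahn-Banach: separate the open unit ball of \<open>N\<close> from
  \<open>u = v / N v\<close> by a hyperplane and rescale its normal.\<close>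
lemma supporting_functional:
  obtains b where "\<And>w. b \<bullet> w \<le> N w" "b \<bullet> v = N v"
proof (cases "v = 0")
  case True
  then show ?thesis
    using that[of 0] nonneg by simp
next
  case False
  define u where "u = v /\<^sub>R N v"
  have "N u = 1"
    using pos[OF False] by (simp add: u_def scaleR)
  have "convex {w. N w < 1}"
  proof (rule convexI)
    fix x y :: "real^'n" and s t :: real
    assume "x \<in> {w. N w < 1}" "y \<in> {w. N w < 1}" "0 \<le> s" "0 \<le> t" "s + t = 1"
    then show "s *\<^sub>R x + t *\<^sub>R y \<in> {w. N w < 1}"
      using triangle[of "s *\<^sub>R x" "t *\<^sub>R y"] convex_bound_lt[of "N x" 1 "N y" s t]
      by (simp add: scaleR)
  qed
  then have "convex ((\<lambda>w. w - u) ` {w. N w < 1})"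
    by (rule convex_translation_subtract)
  moreover have "0 \<notin> (\<lambda>w. w - u) ` {w. N w < 1}"
    using \<open>N u = 1\<close> by auto
  ultimately obtain a' where "a' \<noteq> 0" "\<forall>x\<in>(\<lambda>w. w - u) ` {w. N w < 1}. 0 \<le> a' \<bullet> x"
    using separating_hyperplane_set_0 by blast
  then obtain a where "a \<noteq> 0" and a: "\<And>w. N w < 1 \<Longrightarrow> a \<bullet> w \<le> a \<bullet> u"
    by (intro that[of "- a'"]) (auto simp: inner_diff_right)
  have unit_ball: "a \<bullet> w \<le> a \<bullet> u" if "N w \<le> 1" for w
  proof (rule field_le_mult_one_interval)
    fix t :: real
    assume "0 < t" "t < 1"
    have "N (t *\<^sub>R w) = t * N w"
      using \<open>0 < t\<close> by (simp add: scaleR)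
    also have "\<dots> < 1"
      using mult_left_le[OF that, of t] \<open>0 < t\<close> \<open>t < 1\<close> by linarith
    finally show "t * (a \<bullet> w) \<le> a \<bullet> u"
      using a by fastforce
  qed
  have bound: "a \<bullet> w \<le> (a \<bullet> u) * N w" for w
    using unit_ball[of "w /\<^sub>R N w"] pos[of w] by (cases "w = 0") (simp_all add: scaleR field_simps)
  have "0 < (a \<bullet> u) * N a"
    using bound[of a] \<open>a \<noteq> 0\<close> by (meson inner_gt_zero_iff less_le_trans)
  then have "0 < a \<bullet> u"
    using nonneg[of a] by (simp add: zero_less_mult_iff)
  show ?thesis
  proof (rule that[of "a /\<^sub>R (a \<bullet> u)"])
    show "(a /\<^sub>R (a \<bullet> u)) \<bullet> w \<le> N w" for w
      using bound[of w] \<open>0 < a \<bullet> u\<close> by (simp add: field_simps)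
    have "a \<bullet> v = N v * (a \<bullet> u)"
      using pos[OF False] by (simp add: u_def)
    then show "(a /\<^sub>R (a \<bullet> u)) \<bullet> v = N v"
      using \<open>0 < a \<bullet> u\<close> by simp
  qed
qed

lemma mean_value_inequality:
  fixes f f' :: "real \<Rightarrow> real^'n"
  assumes "\<And>t. 0 \<le> t \<Longrightarrow> t \<le> 1 \<Longrightarrow> (f has_vector_derivative f' t) (at t)"
    and "\<And>t. 0 \<le> t \<Longrightarrow> t \<le> 1 \<Longrightarrow> (g has_real_derivative g' t) (at t)"
    and "\<And>t. 0 \<le> t \<Longrightarrow> t \<le> 1 \<Longrightarrow> N (f' t) \<le> g' t"
  shows "N (f 1 - f 0) \<le> g 1 - g 0"
proof -
  obtain b where b: "\<And>w. b \<bullet> w \<le> N w" "b \<bullet> (f 1 - f 0) = N (f 1 - f 0)"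
    using supporting_functional by blast
  have "(\<lambda>t. b \<bullet> f t - g t) 1 \<le> (\<lambda>t. b \<bullet> f t - g t) 0"
  proof (rule DERIV_nonpos_imp_nonincreasing[of 0 1])
    fix t :: real
    assume t: "0 \<le> t" "t \<le> 1"
    have "((\<lambda>t. b \<bullet> f t - g t) has_real_derivative b \<bullet> f' t - g' t) (at t)"
      using assms(1,2)[OF t] unfolding has_vector_derivative_def has_field_derivative_def
      by (auto intro!: derivative_eq_intros simp: fun_eq_iff algebra_simps)
    moreover have "b \<bullet> f' t - g' t \<le> 0"
      using b(1)[of "f' t"] assms(3)[OF t] by simp
    ultimately show "\<exists>y. ((\<lambda>t. b \<bullet> f t - g t) has_real_derivative y) (at t) \<and> y \<le> 0"
      by blast
  qed simp
  then show ?thesis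
    using b(2) by (simp add: inner_diff_right)
qed

lemma increment_le:
  assumes deriv: "\<forall>y\<in>closed_segment z x. (F has_derivative (\<lambda>h. J y *v h)) (at y)"
    and bound: "\<forall>y\<in>closed_segment z x. induced_norm N (J y) \<le> M"
  shows "N (F x - F z) \<le> M * N (x - z)"
proof -
  let ?p = "\<lambda>t. z + t *\<^sub>R (x - z)"
  have "N (F (?p 1) - F (?p 0)) \<le> M * N (x - z) * 1 - M * N (x - z) * 0"
  proof (rule mean_value_inequality)
    fix t :: real
    assume t: "0 \<le> t" "t \<le> 1"
    show "((\<lambda>t. F (?p t)) has_vector_derivative J (?p t) *v (x - z)) (at t)"
      by (rule has_vector_derivative_along_segment[OF deriv t])
    show "((\<lambda>t. M * N (x - z) * t) has_real_derivative M * N (x - z)) (at t)"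
      by (auto intro!: derivative_eq_intros)
    show "N (J (?p t) *v (x - z)) \<le> M * N (x - z)"
      using mult_le_induced_norm[of "J (?p t)" "x - z"] nonneg[of "x - z"]
        bound add_scaleR_diff_in_closed_segment[OF t]
      by (meson mult_right_mono order_trans)
  qed
  then show ?thesis
    by simp
qed

text \<open>Mean value inequality for \<open>F(p t) - t J x (x - z)\<close> along \<open>p t = z + t (x - z)\<close>,
  compared with \<open>-(L/2) r\<^sup>2 (1 - t)\<^sup>2\<close>: since \<open>N (p t - x) = (1 - t) r\<close>, the Lipschitz bound
  makes its derivative \<open>L r\<^sup>2 (1 - t)\<close> dominate.\<close>
lemma linearization_error_le:
  assumes deriv: "\<forall>y\<in>closed_segment z x. (F has_derivative (\<lambda>h. J y *v h)) (at y)"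
    and lipschitz: "\<forall>y\<in>closed_segment z x. induced_norm N (J y - J x) \<le> L * N (y - x)"
  shows "N (F x - F z - J x *v (x - z)) \<le> L / 2 * N (x - z)^2"
proof -
  let ?p = "\<lambda>t. z + t *\<^sub>R (x - z)"
  let ?r = "N (x - z)"
  let ?f = "\<lambda>t. F (?p t) - t *\<^sub>R (J x *v (x - z))"
  let ?g = "\<lambda>t. - (L / 2 * ?r^2 * (1 - t)^2)"
  have "N (?f 1 - ?f 0) \<le> ?g 1 - ?g 0"
  proof (rule mean_value_inequality)
    fix t :: real
    assume t: "0 \<le> t" "t \<le> 1"
    have "((\<lambda>t. t *\<^sub>R (J x *v (x - z))) has_vector_derivative J x *v (x - z)) (at t)"
      by (auto intro!: derivative_eq_intros simp: has_vector_derivative_def)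
    from has_vector_derivative_diff[OF has_vector_derivative_along_segment[OF deriv t] this]
    show "(?f has_vector_derivative (J (?p t) - J x) *v (x - z)) (at t)"
      by (simp add: matrix_vector_mult_diff_rdistrib)
    show "(?g has_real_derivative L * ?r^2 * (1 - t)) (at t)"
      by (auto intro!: derivative_eq_intros simp: power2_eq_square field_simps)
    have "induced_norm N (J (?p t) - J x) \<le> L * N (?p t - x)"
      using lipschitz add_scaleR_diff_in_closed_segment[OF t] by blast
    also have "?p t - x = (t - 1) *\<^sub>R (x - z)"
      by (simp add: algebra_simps)
    finally have "induced_norm N (J (?p t) - J x) \<le> L * ((1 - t) * ?r)"
      using t by (simp add: scaleR)
    then have "induced_norm N (J (?p t) - J x) * ?r \<le> L * ((1 - t) * ?r) * ?r"
      using nonneg by (rule mult_right_mono)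
    then show "N ((J (?p t) - J x) *v (x - z)) \<le> L * ?r^2 * (1 - t)"
      using mult_le_induced_norm[of "J (?p t) - J x" "x - z"]
      by (simp add: power2_eq_square algebra_simps)
  qed
  then show ?thesis
    by (simp add: algebra_simps)
qed

lemma perturbed_step_le:
  assumes "N (g - z) \<le> a" "N q \<le> e"
  shows "N ((mat 1 + D) *v (g - q) - z) \<le> a + e + induced_norm N D * (N z + a + e)"
proof -
  have step: "N (g - q - z) \<le> a + e"
    using triangle[of "g - z" "- q"] minus[of q] assms by (simp add: algebra_simps)
  have "N ((mat 1 + D) *v (g - q) - z) \<le> N (g - q - z) + N (D *v (g - q))"
    using triangle[of "g - q - z" "D *v (g - q)"]
    by (simp add: matrix_vector_mult_add_rdistrib algebra_simps)
  also have "N (D *v (g - q)) \<le> induced_norm N D * (N z + a + e)"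
  proof -
    have "N (g - q) \<le> N z + a + e"
      using triangle[of z "g - q - z"] step by simp
    then show ?thesis
      using mult_le_induced_norm[of D "g - q"] induced_norm_nonneg[of D]
      by (meson mult_left_mono order_trans)
  qed
  finally show ?thesis
    using step by linarith
qed

lemma newton_step_error_le:
  assumes "invertible (J x)" "induced_norm N (matrix_inv (J x)) \<le> K" "F z = 0"
    and "\<forall>y\<in>closed_segment z x. (F has_derivative (\<lambda>h. J y *v h)) (at y)"
    and "\<forall>y\<in>closed_segment z x. induced_norm N (J y - J x) \<le> L * N (y - x)"
  shows "N (x - matrix_inv (J x) *v F x - z) \<le> 1/2 * L * K * N (x - z)^2"
proof -
  have "x - matrix_inv (J x) *v F x - z = matrix_inv (J x) *v (J x *v (x - z) - F x)"
    using matrix_inv_mult_left[OF assms(1)]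
    by (simp add: matrix_vector_mult_diff_distrib matrix_vector_mul_assoc)
  then have "N (x - matrix_inv (J x) *v F x - z)
      \<le> induced_norm N (matrix_inv (J x)) * N (F x - F z - J x *v (x - z))"
    using mult_le_induced_norm[of "matrix_inv (J x)" "J x *v (x - z) - F x"] assms(3)
      commute[of "J x *v (x - z)" "F x"] by simp
  also have "\<dots> \<le> K * (L / 2 * N (x - z)^2)"
    using assms(2) linearization_error_le[OF assms(4,5)] induced_norm_nonneg nonneg
    by (meson mult_mono order_trans)
  finally show ?thesis
    by (simp add: algebra_simps)
qed

lemma newton_correction_le:
  assumes "induced_norm N (matrix_inv (J x)) \<le> K" "F z = 0"
    and "\<forall>y\<in>closed_segment z x. (F has_derivative (\<lambda>h. J y *v h)) (at y)"
    and "\<forall>y\<in>closed_segment z x. induced_norm N (J y) \<le> M"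
  shows "N (matrix_inv (J x) *v F x) \<le> K * M * N (x - z)"
proof -
  have "N (matrix_inv (J x) *v F x) \<le> induced_norm N (matrix_inv (J x)) * N (F x - F z)"
    using mult_le_induced_norm assms(2) by simp
  also have "\<dots> \<le> K * (M * N (x - z))"
    using assms(1) increment_le[OF assms(3,4)] induced_norm_nonneg nonneg
    by (meson mult_mono order_trans)
  finally show ?thesis
    by (simp add: mult.assoc)
qed

end

theorem theorem1:
  fixes \<Omega> :: "(real^'n) set"
    and F :: "real^'n \<Rightarrow> real^'n"
    and J :: "real^'n \<Rightarrow> real^'n^'n"
    and N :: "real^'n \<Rightarrow> real"
    and K L M :: real
    and z xk :: "real^'n"
    and Dk Ek :: "real^'n^'n"
  assumes "open \<Omega>"
    and deriv: "\<forall>x\<in>\<Omega>. (F has_derivative (\<lambda>h. J x *v h)) (at x)"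
    and C1: "continuous_on \<Omega> J"
    and norm: "is_vec_norm N"
    and "0 \<le> K" "0 \<le> L" "0 \<le> M"
    and inv: "\<forall>x\<in>\<Omega>. invertible (J x)"
    and Kb: "\<forall>x\<in>\<Omega>. induced_norm N (matrix_inv (J x)) \<le> K"
    and Lb: "\<forall>x\<in>\<Omega>. \<forall>y\<in>\<Omega>. induced_norm N (J x - J y) \<le> L * N (x - y)"
    and Mb: "\<forall>x\<in>\<Omega>. induced_norm N (J x) \<le> M"
    and "z \<in> \<Omega>" "F z = 0"
    and "xk \<in> \<Omega>"
    and seg: "{t *\<^sub>R xk + (1 - t) *\<^sub>R z | t. t \<in> {0..1}} \<subseteq> \<Omega>"
    and "is_diagonal Dk"
  shows "let g = (\<lambda>x. x - matrix_inv (J x) *v F x);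
             xk1 = (mat 1 + Dk) *v (g xk - Ek *v (matrix_inv (J xk) *v F xk))
         in xk1 - z = g xk - z - Ek *v (matrix_inv (J xk) *v F xk)
                      + Dk *v (g xk - Ek *v (matrix_inv (J xk) *v F xk))
          \<and> N (xk1 - z) \<le> 1/2 * L * K * (N (xk - z))^2
                          + induced_norm N Ek * K * M * N (xk - z)
                          + induced_norm N Dk * (N z + 1/2 * L * K * (N (xk - z))^2
                                + induced_norm N Ek * K * M * N (xk - z))"
proof -
  interpret vec_norm N
    by (rule vec_norm.intro[OF norm])
  have "closed_segment z xk \<subseteq> \<Omega>"
    using seg by (auto simp: closed_segment_def add.commute)
  then have deriv_seg: "\<forall>y\<in>closed_segment z xk. (F has_derivative (\<lambda>h. J y *v h)) (at y)"
    and lipschitz_seg: "\<forall>y\<in>closed_segment z xk. induced_norm N (J y - J xk) \<le> L * N (y - xk)"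
    and bound_seg: "\<forall>y\<in>closed_segment z xk. induced_norm N (J y) \<le> M"
    using deriv Lb Mb \<open>xk \<in> \<Omega>\<close> by blast+
  define g where "g = xk - matrix_inv (J xk) *v F xk"
  define q where "q = Ek *v (matrix_inv (J xk) *v F xk)"
  define r where "r = N (xk - z)"
  have "N (g - z) \<le> 1/2 * L * K * r^2"
    unfolding g_def r_def using inv Kb \<open>xk \<in> \<Omega>\<close>
    by (intro newton_step_error_le[OF _ _ \<open>F z = 0\<close> deriv_seg lipschitz_seg]) auto
  moreover have "N q \<le> induced_norm N Ek * K * M * r"
  proof -
    have "N (matrix_inv (J xk) *v F xk) \<le> K * M * r"
      unfolding r_def using Kb \<open>xk \<in> \<Omega>\<close>
      by (intro newton_correction_le[OF _ \<open>F z = 0\<close> deriv_seg bound_seg]) auto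
    then show ?thesis
      unfolding q_def using mult_le_induced_norm induced_norm_nonneg
      by (metis mult.assoc mult_left_mono order_trans)
  qed
  ultimately have "N ((mat 1 + Dk) *v (g - q) - z) \<le> 1/2 * L * K * r^2 + induced_norm N Ek * K * M * r
      + induced_norm N Dk * (N z + 1/2 * L * K * r^2 + induced_norm N Ek * K * M * r)"
    by (rule perturbed_step_le)
  moreover have "(mat 1 + Dk) *v (g - q) - z = g - z - q + Dk *v (g - q)"
    by (simp add: matrix_vector_mult_add_rdistrib)
  ultimately show ?thesis
    unfolding Let_def g_def[symmetric] q_def[symmetric] r_def[symmetric] by blast
qed

end
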